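(* Let $S\in\mathbb{R}^d$ be a random vector with density $f(\cdot\mid\beta^* )$ and let $\Omega\in\mathbb{R}^p$ be a random vector, independent of $S$, with density $g$ supported on $\mathbb{R}^p$. Let $D\in\mathbb{R}^{p\times d}$, $P\in\mathbb{R}^{p\times p}$ invertible and $q\in\mathbb{R}^p$ be fixed, and define the optimization variable $O\in\mathbb{R}^p$ through the inversion map $\Omega = DS+PO+q$, i.e. $O=P^{-1}(\Omega-DS-q)$. Then for every convex, compact set $\mathcal{R}\subset\mathbb{R}^d\times\mathbb{R}^p$, \[ \log\mathbb{P}\big((S,O)\in\mathcal{R}\mid\beta^*\big)\;\le\;-\inf_{(s,o)\in\mathcal{R}}\Big\{\Lambda_f^*(s\mid\beta^* )+\Lambda_g^*(Ds+Po+q)\Big\}. \]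
   Context: $\Lambda_f(t\mid\beta^* )=\log\mathbb{E}[\exp(t^TS)\mid\beta^*]$ is the log moment generating function (log-MGF) of $S$ and $\Lambda_f^*(s\mid\beta^* )=\sup_{t\in\mathbb{R}^d}\{t^Ts-\Lambda_f(t\mid\beta^* )\}$ its convex conjugate; similarly $\Lambda_g(t)=\log\mathbb{E}[\exp(t^T\Omega)]$ and $\Lambda_g^*(w)=\sup_{t\in\mathbb{R}^p}\{t^Tw-\Lambda_g(t)\}$. The probability is with respect to the joint law of $(S,O)$ induced by the independent laws of $S$ and $\Omega$. *)

theory Defs
  imports "HOL-Probability.Probability"
begin

definition log_mgf :: "'a::euclidean_space measure \<Rightarrow> 'a \<Rightarrow> real" where
  "log_mgf M t = ln (\<integral>x. exp (t \<bullet> x) \<partial>M)"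

text \<open>Convex conjugate of the log-MGF (extended-real valued). Points t where the MGF is
  infinite (log-MGF = +infinity) contribute -infinity to the supremum and are omitted.\<close>
definition log_mgf_conj :: "'a::euclidean_space measure \<Rightarrow> 'a \<Rightarrow> ereal" where
  "log_mgf_conj M s =
     (SUP t \<in> {t. integrable M (\<lambda>x. exp (t \<bullet> x))}. ereal (t \<bullet> s - log_mgf M t))"

end

theory Submission
  imports Defs
begin

text \<open>The inversion map is an affine bijection, so the event is that \<open>(S, \<Omega>)\<close> lies in the
  affine image \<open>K\<close> of \<open>R\<close>, again convex and compact. If its probability \<open>p\<close> is positive, the
  barycentre \<open>m\<close> of the law of \<open>(S, \<Omega>)\<close> restricted to \<open>K\<close> lies in \<open>K\<close> by convexity, and Jensen's
  inequality for \<open>exp\<close> on \<open>K\<close> gives \<open>p exp (t \<bullet> m) \<le> E exp (t \<bullet> (S, \<Omega>))\<close> for every \<open>t\<close>. By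
  independence the right-hand side factors into the two moment generating functions, hence
  \<open>\<Lambda>\<^sub>f\<^sup>*(fst m) + \<Lambda>\<^sub>g\<^sup>*(snd m) \<le> - ln p\<close>, which bounds the infimum over \<open>K\<close>.\<close>

lemma SUP_add_SUP_le_ereal:
  fixes f :: "'a \<Rightarrow> real" and g :: "'b \<Rightarrow> real"
  assumes "A \<noteq> {}" "B \<noteq> {}" and le: "\<And>a b. a \<in> A \<Longrightarrow> b \<in> B \<Longrightarrow> f a + g b \<le> c"
  shows "(SUP a\<in>A. ereal (f a)) + (SUP b\<in>B. ereal (g b)) \<le> ereal c"
proof -
  have "(SUP a\<in>A. ereal (f a)) \<noteq> -\<infinity>"
    using \<open>A \<noteq> {}\<close> by (metis SUP_upper all_not_in_conv ereal_infty_less_eq(2) MInfty_neq_ereal(1))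
  then have "(SUP a\<in>A. ereal (f a)) + (SUP b\<in>B. ereal (g b))
      = (SUP b\<in>B. SUP a\<in>A. ereal (f a) + ereal (g b))"
    using assms(1,2) by (simp add: SUP_ereal_add_right[symmetric] SUP_ereal_add_left del: plus_ereal.simps)
  also have "\<dots> \<le> ereal c"
    using le by (intro SUP_least) simp
  finally show ?thesis .
qed

lemma sets_pair_measure_borel:
  assumes "sets M1 = sets (borel :: 'a::second_countable_topology measure)"
    and "sets M2 = sets (borel :: 'b::second_countable_topology measure)"
  shows "sets (M1 \<Otimes>\<^sub>M M2) = sets (borel :: ('a \<times> 'b) measure)"
  using sets_pair_measure_cong[OF assms] borel_prod by metis

definition cond_mean :: "'a::euclidean_space measure \<Rightarrow> 'a set \<Rightarrow> 'a" where
  "cond_mean M K = (\<integral>z. indicator K z *\<^sub>R z \<partial>M) /\<^sub>R measure M K"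

lemma integrable_indicator_compact_continuous:
  fixes f :: "'a::euclidean_space \<Rightarrow> 'b::{banach, second_countable_topology}"
  assumes "finite_measure M" "sets M = sets borel" "compact K" "continuous_on K f"
  shows "integrable M (\<lambda>z. indicator K z *\<^sub>R f z)"
proof -
  obtain B where B: "\<And>z. z \<in> K \<Longrightarrow> norm (f z) \<le> B"
    using compact_imp_bounded[OF compact_continuous_image[OF assms(4,3)]]
    unfolding bounded_iff by auto
  have "(\<lambda>z. indicator K z *\<^sub>R f z) \<in> borel_measurable borel"
    using assms(3,4) by (intro borel_measurable_continuous_on_indicator) (auto intro: borel_compact)
  then show ?thesis
    using assms(1,2) B
    by (intro finite_measure.integrable_const_bound[where B="max B 0"])
       (auto simp: measurable_cong_sets[OF assms(2) refl] indicator_def le_max_iff_disj intro!: AE_I2)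
qed

lemma cond_mean_inner:
  assumes "finite_measure M" "sets M = sets borel" "compact K" "measure M K > 0"
  shows "(\<integral>z. indicator K z * (a \<bullet> z) \<partial>M) = measure M K * (a \<bullet> cond_mean M K)"
proof -
  have "(\<integral>z. indicator K z * (a \<bullet> z) \<partial>M) = (\<integral>z. a \<bullet> (indicator K z *\<^sub>R z) \<partial>M)"
    by simp
  also have "\<dots> = a \<bullet> (\<integral>z. indicator K z *\<^sub>R z \<partial>M)"
    using assms by (intro integral_inner_right integrable_indicator_compact_continuous continuous_on_id)
  finally show ?thesis
    using assms(4) by (simp add: cond_mean_def)
qed

lemma cond_mean_mem:
  assumes M: "finite_measure M" "sets M = sets borel"
    and K: "convex K" "compact K" "measure M K > 0"
  shows "cond_mean M K \<in> K"
proof (rule ccontr)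
  assume "cond_mean M K \<notin> K"
  then obtain a b where below: "a \<bullet> cond_mean M K < b" and above: "\<forall>z\<in>K. b < a \<bullet> z"
    using separating_hyperplane_closed_point[OF K(1) compact_imp_closed[OF K(2)]] by blast
  have "K \<in> sets M"
    using M(2) K(2) by (simp add: borel_compact)
  then have "measure M K * b = (\<integral>z. indicator K z * b \<partial>M)"
    using M(1) by (simp add: finite_measure.emeasure_finite)
  also have "\<dots> \<le> (\<integral>z. indicator K z * (a \<bullet> z) \<partial>M)"
  proof (rule integral_mono)
    show "integrable M (\<lambda>z. indicator K z * b)"
      using \<open>K \<in> sets M\<close> M(1) by (simp add: finite_measure.emeasure_finite less_top[symmetric])
    show "integrable M (\<lambda>z. indicator K z * (a \<bullet> z))"
      using integrable_indicator_compact_continuous[OF M K(2), of "\<lambda>z. a \<bullet> z"]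
      by (simp add: continuous_on_inner continuous_on_const continuous_on_id)
  qed (use above in \<open>auto simp: indicator_def less_imp_le\<close>)
  also have "\<dots> = measure M K * (a \<bullet> cond_mean M K)"
    using M K(2,3) by (rule cond_mean_inner)
  finally show False
    using below K(3) by simp
qed

lemma measure_exp_inner_cond_mean_le:
  assumes M: "finite_measure M" "sets M = sets borel" and K: "compact K" "measure M K > 0"
  shows "ennreal (measure M K * exp (t \<bullet> cond_mean M K)) \<le> (\<integral>\<^sup>+z. exp (t \<bullet> z) \<partial>M)"
proof -
  define c where "c = t \<bullet> cond_mean M K"
  have KM: "K \<in> sets M"
    using M(2) K(1) by (simp add: borel_compact)
  have int_ind: "integrable M (indicator K :: _ \<Rightarrow> real)"
    using KM M(1) by (simp add: finite_measure.emeasure_finite less_top[symmetric])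
  have int_inner: "integrable M (\<lambda>z. indicator K z * (t \<bullet> z))"
    using integrable_indicator_compact_continuous[OF M K(1), of "\<lambda>z. t \<bullet> z"]
    by (simp add: continuous_on_inner continuous_on_const continuous_on_id)
  have int_exp: "integrable M (\<lambda>z. indicator K z * exp (t \<bullet> z))"
    using integrable_indicator_compact_continuous[OF M K(1), of "\<lambda>z. exp (t \<bullet> z)"]
    by (simp add: continuous_on_exp continuous_on_inner continuous_on_const continuous_on_id)
  \<comment> \<open>Jensen's inequality for exp on K, via the tangent line at the conditional mean\<close>
  have "(\<integral>z. exp c * (1 - c) * indicator K z + exp c * (indicator K z * (t \<bullet> z)) \<partial>M)
      = exp c * (1 - c) * measure M K + exp c * (measure M K * c)"
    using int_ind int_inner KM M(1) cond_mean_inner[OF M K, of t]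
    by (simp add: c_def finite_measure.emeasure_finite)
  then have "measure M K * exp c
      = (\<integral>z. exp c * (1 - c) * indicator K z + exp c * (indicator K z * (t \<bullet> z)) \<partial>M)"
    by (simp add: algebra_simps)
  also have "\<dots> \<le> (\<integral>z. indicator K z * exp (t \<bullet> z) \<partial>M)"
  proof (intro integral_mono int_exp)
    show "integrable M (\<lambda>z. exp c * (1 - c) * indicator K z + exp c * (indicator K z * (t \<bullet> z)))"
      using int_ind int_inner by simp
    have "exp c * (1 + (t \<bullet> z - c)) \<le> exp (t \<bullet> z)" for z
      using mult_left_mono[OF exp_ge_add_one_self[of "t \<bullet> z - c"], of "exp c"]
      by (simp add: exp_diff)
    then show "exp c * (1 - c) * indicator K z + exp c * (indicator K z * (t \<bullet> z))
        \<le> indicator K z * exp (t \<bullet> z)" for z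
      by (simp add: indicator_def algebra_simps)
  qed
  finally have "ennreal (measure M K * exp c) \<le> (\<integral>\<^sup>+z. indicator K z * exp (t \<bullet> z) \<partial>M)"
    using int_exp by (simp add: nn_integral_eq_integral)
  also have "\<dots> \<le> (\<integral>\<^sup>+z. exp (t \<bullet> z) \<partial>M)"
    by (intro nn_integral_mono) (simp add: indicator_def)
  finally show ?thesis
    by (simp add: c_def)
qed

lemma nn_integral_exp_inner_pair_measure:
  fixes t1 :: "'a::euclidean_space" and t2 :: "'b::euclidean_space"
  assumes "sigma_finite_measure M2" "sets M1 = sets borel" "sets M2 = sets borel"
  shows "(\<integral>\<^sup>+z. exp ((t1, t2) \<bullet> z) \<partial>(M1 \<Otimes>\<^sub>M M2))
       = (\<integral>\<^sup>+x. exp (t1 \<bullet> x) \<partial>M1) * (\<integral>\<^sup>+y. exp (t2 \<bullet> y) \<partial>M2)"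
proof -
  have meas: "(\<lambda>z. ennreal (exp ((t1, t2) \<bullet> z))) \<in> borel_measurable (M1 \<Otimes>\<^sub>M M2)"
    by (simp add: measurable_cong_sets[OF sets_pair_measure_borel[OF assms(2,3)] refl])
  have "(\<integral>\<^sup>+z. exp ((t1, t2) \<bullet> z) \<partial>(M1 \<Otimes>\<^sub>M M2))
      = (\<integral>\<^sup>+x. \<integral>\<^sup>+y. ennreal (exp (t1 \<bullet> x)) * ennreal (exp (t2 \<bullet> y)) \<partial>M2 \<partial>M1)"
    using sigma_finite_measure.nn_integral_fst[OF assms(1) meas]
    by (simp add: exp_add ennreal_mult)
  also have "\<dots> = (\<integral>\<^sup>+x. \<integral>\<^sup>+y. exp (t2 \<bullet> y) \<partial>M2 * ennreal (exp (t1 \<bullet> x)) \<partial>M1)"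
    using assms(3) by (simp add: nn_integral_cmult measurable_cong_sets[OF assms(3) refl] mult.commute)
  also have "\<dots> = (\<integral>\<^sup>+x. exp (t1 \<bullet> x) \<partial>M1) * (\<integral>\<^sup>+y. exp (t2 \<bullet> y) \<partial>M2)"
    using assms(2) by (simp add: nn_integral_multc measurable_cong_sets[OF assms(2) refl] mult.commute)
  finally show ?thesis .
qed

lemma ln_measure_add_inner_cond_mean_le_log_mgf:
  fixes M1 :: "'a::euclidean_space measure" and M2 :: "'b::euclidean_space measure"
    and K :: "('a \<times> 'b) set"
  defines "m \<equiv> cond_mean (M1 \<Otimes>\<^sub>M M2) K"
  assumes M: "prob_space M1" "prob_space M2" "sets M1 = sets borel" "sets M2 = sets borel"
    and K: "compact K" "measure (M1 \<Otimes>\<^sub>M M2) K > 0"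
    and t1: "integrable M1 (\<lambda>x. exp (t1 \<bullet> x))" and t2: "integrable M2 (\<lambda>y. exp (t2 \<bullet> y))"
  shows "ln (measure (M1 \<Otimes>\<^sub>M M2) K) + (t1 \<bullet> fst m + t2 \<bullet> snd m) \<le> log_mgf M1 t1 + log_mgf M2 t2"
proof -
  interpret pair_prob_space M1 M2
    using M(1,2) by (simp add: pair_prob_space_def pair_sigma_finite_def prob_space_imp_sigma_finite)
  define p where "p = measure (M1 \<Otimes>\<^sub>M M2) K"
  define I1 where "I1 = (\<integral>x. exp (t1 \<bullet> x) \<partial>M1)"
  define I2 where "I2 = (\<integral>y. exp (t2 \<bullet> y) \<partial>M2)"
  have I_nonneg: "I1 \<ge> 0" "I2 \<ge> 0"
    unfolding I1_def I2_def by simp_all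
  have "ennreal (p * exp ((t1, t2) \<bullet> m)) \<le> (\<integral>\<^sup>+z. exp ((t1, t2) \<bullet> z) \<partial>(M1 \<Otimes>\<^sub>M M2))"
    unfolding p_def m_def
    using K by (intro measure_exp_inner_cond_mean_le finite_measure_axioms sets_pair_measure_borel M(3,4))
  also have "\<dots> = ennreal (I1 * I2)"
    using t1 t2 I_nonneg
    by (simp add: nn_integral_exp_inner_pair_measure[OF M2.sigma_finite_measure_axioms M(3,4)]
        nn_integral_eq_integral I1_def I2_def ennreal_mult)
  finally have le: "p * exp ((t1, t2) \<bullet> m) \<le> I1 * I2"
    using I_nonneg by (simp add: ennreal_le_iff)
  have "p > 0"
    using K(2) by (simp add: p_def)
  then have "I1 * I2 > 0"
    using le by (smt (verit) exp_gt_zero mult_pos_pos)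
  then have "I1 > 0" "I2 > 0"
    using I_nonneg by (auto simp: zero_less_mult_iff)
  have "ln p + (t1, t2) \<bullet> m = ln (p * exp ((t1, t2) \<bullet> m))"
    using \<open>p > 0\<close> by (simp add: ln_mult)
  also have "\<dots> \<le> ln (I1 * I2)"
    using le \<open>p > 0\<close> by (intro ln_mono) simp_all
  also have "\<dots> = log_mgf M1 t1 + log_mgf M2 t2"
    using \<open>I1 > 0\<close> \<open>I2 > 0\<close> by (simp add: ln_mult log_mgf_def I1_def I2_def)
  finally show ?thesis
    by (simp add: p_def inner_Pair_0 inner_prod_def)
qed

lemma log_mgf_conj_cond_mean_le:
  fixes M1 :: "'a::euclidean_space measure" and M2 :: "'b::euclidean_space measure"
    and K :: "('a \<times> 'b) set"
  defines "m \<equiv> cond_mean (M1 \<Otimes>\<^sub>M M2) K"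
  assumes "prob_space M1" "prob_space M2" "sets M1 = sets borel" "sets M2 = sets borel"
    and "compact K" "measure (M1 \<Otimes>\<^sub>M M2) K > 0"
  shows "log_mgf_conj M1 (fst m) + log_mgf_conj M2 (snd m) \<le> ereal (- ln (measure (M1 \<Otimes>\<^sub>M M2) K))"
  unfolding log_mgf_conj_def
proof (rule SUP_add_SUP_le_ereal)
  show "{t. integrable M1 (\<lambda>x. exp (t \<bullet> x))} \<noteq> {}" "{t. integrable M2 (\<lambda>x. exp (t \<bullet> x))} \<noteq> {}"
    using assms(2,3) by (auto intro!: exI[of _ 0] finite_measure.integrable_const prob_space.finite_measure)
qed (use ln_measure_add_inner_cond_mean_le_log_mgf[OF assms(2-7)] in \<open>force simp: m_def\<close>)

lemma ln_measure_le_neg_INF_log_mgf_conj: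
  fixes M1 :: "'a::euclidean_space measure" and M2 :: "'b::euclidean_space measure"
  assumes M: "prob_space M1" "prob_space M2" "sets M1 = sets borel" "sets M2 = sets borel"
    and K: "convex K" "compact K" "measure (M1 \<Otimes>\<^sub>M M2) K > 0"
  shows "ereal (ln (measure (M1 \<Otimes>\<^sub>M M2) K))
       \<le> - (INF m\<in>K. log_mgf_conj M1 (fst m) + log_mgf_conj M2 (snd m))"
proof -
  interpret pair_prob_space M1 M2
    using M(1,2) by (simp add: pair_prob_space_def pair_sigma_finite_def prob_space_imp_sigma_finite)
  have "cond_mean (M1 \<Otimes>\<^sub>M M2) K \<in> K"
    using finite_measure_axioms sets_pair_measure_borel[OF M(3,4)] K by (rule cond_mean_mem)
  then have "(INF m\<in>K. log_mgf_conj M1 (fst m) + log_mgf_conj M2 (snd m))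
      \<le> ereal (- ln (measure (M1 \<Otimes>\<^sub>M M2) K))"
    using log_mgf_conj_cond_mean_le[OF M K(2,3)] by (rule INF_lower2)
  then have "- ereal (- ln (measure (M1 \<Otimes>\<^sub>M M2) K))
      \<le> - (INF m\<in>K. log_mgf_conj M1 (fst m) + log_mgf_conj M2 (snd m))"
    by (simp only: ereal_minus_le_minus)
  then show ?thesis
    by simp
qed

lemma matrix_inv_mul:
  fixes A :: "'a::semiring_1^'n^'n"
  assumes "invertible A"
  shows "A ** matrix_inv A = mat 1" "matrix_inv A ** A = mat 1"
  using someI_ex[OF assms[unfolded invertible_def]] by (auto simp: matrix_inv_def)

lemma inversion_preimage_eq_image:
  fixes D :: "real^'d^'p" and P :: "real^'p^'p"
  assumes "invertible P"
  shows "{(s, w). (s, matrix_inv P *v (w - D *v s - q)) \<in> R}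
       = (\<lambda>z. (fst z, D *v fst z + P *v snd z + q)) ` R"
proof (intro set_eqI iffI)
  fix x assume "x \<in> {(s, w). (s, matrix_inv P *v (w - D *v s - q)) \<in> R}"
  then show "x \<in> (\<lambda>z. (fst z, D *v fst z + P *v snd z + q)) ` R"
    by (auto simp: matrix_vector_mul_assoc matrix_inv_mul[OF assms] intro!: image_eqI)
next
  fix x assume "x \<in> (\<lambda>z. (fst z, D *v fst z + P *v snd z + q)) ` R"
  then show "x \<in> {(s, w). (s, matrix_inv P *v (w - D *v s - q)) \<in> R}"
    by (auto simp: matrix_vector_mul_assoc matrix_inv_mul[OF assms])
qed

lemma convex_compact_affine_image:
  fixes D :: "real^'d^'p" and P :: "real^'p^'p"
  assumes "convex R" "compact R"
  shows "convex ((\<lambda>z. (fst z, D *v fst z + P *v snd z + q)) ` R)"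
    and "compact ((\<lambda>z. (fst z, D *v fst z + P *v snd z + q)) ` R)"
proof -
  define L where "L z = (fst z, D *v fst z + P *v snd z)" for z :: "(real^'d) \<times> (real^'p)"
  have "linear L"
    by (intro linearI) (auto simp: L_def matrix_vector_right_distrib matrix_vector_mult_scaleR algebra_simps)
  moreover have "(\<lambda>z. (fst z, D *v fst z + P *v snd z + q)) ` R = (+) (0, q) ` L ` R"
    by (auto simp: L_def image_image)
  ultimately show "convex ((\<lambda>z. (fst z, D *v fst z + P *v snd z + q)) ` R)"
    and "compact ((\<lambda>z. (fst z, D *v fst z + P *v snd z + q)) ` R)"
    using assms
    by (auto intro!: convex_translation convex_linear_image compact_translation
        compact_continuous_image linear_continuous_on simp: linear_conv_bounded_linear)
qed

lemma prob_space_density_lborel: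
  assumes "f \<in> borel_measurable borel" "(\<integral>\<^sup>+x. ennreal (f x) \<partial>lborel) = 1"
  shows "prob_space (density lborel (\<lambda>x. ennreal (f x)))"
  using assms by (intro prob_spaceI) (simp add: emeasure_density)

theorem theorem1:
  fixes f :: "real^'d \<Rightarrow> real" and g :: "real^'p \<Rightarrow> real"
    and D :: "real^'d^'p" and P :: "real^'p^'p" and q :: "real^'p"
    and R :: "((real^'d) \<times> (real^'p)) set"
  assumes f_meas: "f \<in> borel_measurable borel"
    and f_nonneg: "\<And>x. f x \<ge> 0"
    and f_int: "(\<integral>\<^sup>+ x. ennreal (f x) \<partial>lborel) = 1"
    and g_meas: "g \<in> borel_measurable borel"
    and g_nonneg: "\<And>w. g w \<ge> 0"
    and g_int: "(\<integral>\<^sup>+ w. ennreal (g w) \<partial>lborel) = 1"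
    and g_supp: "closure {w. g w > 0} = UNIV"
    and P_inv: "invertible P"
    and R_convex: "convex R" and R_compact: "compact R"
  shows "let MS = density lborel (\<lambda>x. ennreal (f x));
             MW = density lborel (\<lambda>w. ennreal (g w));
             pr = measure (MS \<Otimes>\<^sub>M MW)
                    {(s, w). (s, matrix_inv P *v (w - D *v s - q)) \<in> R}
         in pr = 0 \<or>
            ereal (ln pr) \<le>
              - (INF z \<in> R. log_mgf_conj MS (fst z)
                            + log_mgf_conj MW (D *v fst z + P *v snd z + q))"
proof -
  define MS where "MS = density lborel (\<lambda>x. ennreal (f x))"
  define MW where "MW = density lborel (\<lambda>w. ennreal (g w))"
  define T where "T z = (fst z, D *v fst z + P *v snd z + q)" for z :: "(real^'d) \<times> (real^'p)"
  have M: "prob_space MS" "prob_space MW" "sets MS = sets borel" "sets MW = sets borel"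
    using f_meas f_int g_meas g_int by (simp_all add: MS_def MW_def prob_space_density_lborel)
  have K: "convex (T ` R)" "compact (T ` R)"
    using R_convex R_compact unfolding T_def by (rule convex_compact_affine_image)+
  have "measure (MS \<Otimes>\<^sub>M MW) (T ` R) = 0 \<or> ereal (ln (measure (MS \<Otimes>\<^sub>M MW) (T ` R)))
      \<le> - (INF m\<in>T ` R. log_mgf_conj MS (fst m) + log_mgf_conj MW (snd m))"
    using ln_measure_le_neg_INF_log_mgf_conj[OF M K] measure_nonneg[of "MS \<Otimes>\<^sub>M MW" "T ` R"]
    by linarith
  then show ?thesis
    by (simp add: Let_def MS_def MW_def T_def image_image inversion_preimage_eq_image[OF P_inv])
qed

end
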